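(* Let $\mathcal{B}\in\mathbb{R}^{l\times m\times n}$ and integers $r_1<k_1<l$, $r_2<k_2<m$, $r_3<k_3<n$, and let $\mathcal{C}\in\mathbb{R}^{k_1\times k_2\times k_3}$ be the leading subtensor $\mathcal{C}=\mathcal{B}(1{:}k_1,1{:}k_2,1{:}k_3)$. Define $f(X,Y,Z)=\|\mathcal{B}\cdot(X,Y,Z)\|^2$ on $\mathrm{Gr}^3=(\mathrm{Gr}(l,r_1),\mathrm{Gr}(m,r_2),\mathrm{Gr}(n,r_3))$ and $g(U,V,W)=\|\mathcal{C}\cdot(U,V,W)\|^2$ on $\mathrm{Gr}^3_k=(\mathrm{Gr}(k_1,r_1),\mathrm{Gr}(k_2,r_2),\mathrm{Gr}(k_3,r_3))$. Let $E_0=\left(\begin{pmatrix}I_{r_1}\\0\end{pmatrix},\begin{pmatrix}I_{r_2}\\0\end{pmatrix},\begin{pmatrix}I_{r_3}\\0\end{pmatrix}\right)\in\mathrm{Gr}^3$ and let $E_{0k}$ be the point of $\mathrm{Gr}^3_k$ given by the same block formulas (with zero blocks of the appropriate smaller sizes). If the Grassmann Hessian of $f$ is positive definite on the tangent space of $\mathrm{Gr}^3$ at $E_0$, then the Grassmann Hessian of $g$ is positive definite on the tangent space of $\mathrm{Gr}^3_k$ at $E_{0k}$.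
   Context: For a tensor $\mathcal{B}$ and matrices $X,Y,Z$ with compatible row dimensions, $\mathcal{B}\cdot(X,Y,Z)$ is the tensor with entries $\sum_{\alpha,\beta,\gamma}x_{\alpha i}y_{\beta j}z_{\gamma k}b_{\alpha\beta\gamma}$; norms are Frobenius norms. $\mathrm{Gr}(l,r)$ denotes the Grassmann manifold of $r$-dimensional subspaces of $\mathbb{R}^l$, a point being represented by a matrix $X\in\mathbb{R}^{l\times r}$ with orthonormal columns (the equivalence class $\{XQ: Q\in\mathbb{R}^{r\times r}\text{ orthogonal}\}$); the functions $f,g$ are well defined on these products since they are invariant under such right multiplications. The Grassmann Hessian is the Riemannian Hessian on the product manifold. *)

theory Defs
  imports "HOL-Analysis.Analysis"
begin

text \<open>Matrices are functions nat => nat => real with explicit dimensions (0-based indices);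
  tensors are functions nat => nat => nat => real.\<close>

type_synonym mat = "nat \<Rightarrow> nat \<Rightarrow> real"
type_synonym tensor3 = "nat \<Rightarrow> nat \<Rightarrow> nat \<Rightarrow> real"

definition tmult :: "tensor3 \<Rightarrow> nat \<Rightarrow> nat \<Rightarrow> nat \<Rightarrow> mat \<Rightarrow> mat \<Rightarrow> mat \<Rightarrow> tensor3" where
  "tmult B l m n X Y Z = (\<lambda>i j k. \<Sum>a<l. \<Sum>b<m. \<Sum>c<n. X a i * Y b j * Z c k * B a b c)"

definition tnorm2 :: "tensor3 \<Rightarrow> nat \<Rightarrow> nat \<Rightarrow> nat \<Rightarrow> real" where
  "tnorm2 T r1 r2 r3 = (\<Sum>i<r1. \<Sum>j<r2. \<Sum>k<r3. (T i j k)\<^sup>2)"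

definition objective :: "tensor3 \<Rightarrow> nat \<Rightarrow> nat \<Rightarrow> nat \<Rightarrow> nat \<Rightarrow> nat \<Rightarrow> nat \<Rightarrow> mat \<times> mat \<times> mat \<Rightarrow> real" where
  "objective B l m n r1 r2 r3 = (\<lambda>(X, Y, Z). tnorm2 (tmult B l m n X Y Z) r1 r2 r3)"

definition E0 :: "nat \<Rightarrow> nat \<Rightarrow> mat" where
  "E0 l r = (\<lambda>i j. if i < l \<and> j < r \<and> i = j then 1 else 0)"

text \<open>Tangent space of Gr(l,r) at X (horizontal space): l x r matrices D with X^T D = 0.\<close>
definition grass_tangent :: "nat \<Rightarrow> nat \<Rightarrow> mat \<Rightarrow> mat \<Rightarrow> bool" where
  "grass_tangent l r X D \<longleftrightarrow>
     (\<forall>i j. (l \<le> i \<or> r \<le> j) \<longrightarrow> D i j = 0) \<and>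
     (\<forall>i<r. \<forall>j<r. (\<Sum>a<l. X a i * D a j) = 0)"

text \<open>Along it, the second derivative of a smooth
  extension F at t = 0 equals  D^2F(X)[D,D] - tr(D^T D X^T grad F(X)), which is the
  Grassmann Hessian quadratic form (Edelman--Arias--Smith).\<close>
definition grass_curve :: "nat \<Rightarrow> nat \<Rightarrow> mat \<Rightarrow> mat \<Rightarrow> real \<Rightarrow> mat" where
  "grass_curve l r X D t = (\<lambda>i j.
     if i < l \<and> j < r then
       X i j + t * D i j - t\<^sup>2 / 2 * (\<Sum>p<r. X i p * (\<Sum>a<l. D a p * D a j))
     else 0)"

definition grass_hess3 ::
  "(mat \<times> mat \<times> mat \<Rightarrow> real) \<Rightarrow> nat \<Rightarrow> nat \<Rightarrow> nat \<Rightarrow> nat \<Rightarrow> nat \<Rightarrow> nat \<Rightarrow>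
   mat \<times> mat \<times> mat \<Rightarrow> mat \<times> mat \<times> mat \<Rightarrow> real" where
  "grass_hess3 F l m n r1 r2 r3 P D =
     (deriv ^^ 2) (\<lambda>t. F (grass_curve l r1 (fst P) (fst D) t,
                           grass_curve m r2 (fst (snd P)) (fst (snd D)) t,
                           grass_curve n r3 (snd (snd P)) (snd (snd D)) t)) 0"

definition grass_hess3_posdef ::
  "(mat \<times> mat \<times> mat \<Rightarrow> real) \<Rightarrow> nat \<Rightarrow> nat \<Rightarrow> nat \<Rightarrow> nat \<Rightarrow> nat \<Rightarrow> nat \<Rightarrow>
   mat \<times> mat \<times> mat \<Rightarrow> bool" where
  "grass_hess3_posdef F l m n r1 r2 r3 P \<longleftrightarrow>
     (\<forall>D1 D2 D3. grass_tangent l r1 (fst P) D1 \<and> grass_tangent m r2 (fst (snd P)) D2 \<and>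
        grass_tangent n r3 (snd (snd P)) D3 \<and> \<not> (D1 = (\<lambda>_ _. 0) \<and> D2 = (\<lambda>_ _. 0) \<and> D3 = (\<lambda>_ _. 0))
        \<longrightarrow> grass_hess3 F l m n r1 r2 r3 P (D1, D2, D3) > 0)"

end

theory Submission
  imports Defs
begin

text \<open>The leading block is a face of the big problem: a tangent vector at \<open>E\<^sub>0\<^sub>k\<close>, padded
  with zero rows, is tangent at \<open>E\<^sub>0\<close>, the Grassmann curve it generates is the padded small
  curve, and on matrices with zero rows beyond \<open>k\<^sub>i\<close> the multilinear product by \<open>B\<close> only
  sees \<open>C\<close>. Hence both objectives agree along every such curve, so their Hessian forms agree
  on the padded tangent vectors, and positivity passes from \<open>f\<close> to \<open>g\<close>.\<close>

definition leading_subtensor :: "tensor3 \<Rightarrow> nat \<Rightarrow> nat \<Rightarrow> nat \<Rightarrow> tensor3" where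
  "leading_subtensor B k1 k2 k3 = (\<lambda>a b c. if a < k1 \<and> b < k2 \<and> c < k3 then B a b c else 0)"

lemma sum_lessThan_truncate:
  fixes f :: "nat \<Rightarrow> 'a::comm_monoid_add"
  assumes "k \<le> l" "\<And>a. k \<le> a \<Longrightarrow> f a = 0"
  shows "(\<Sum>a<l. f a) = (\<Sum>a<k. f a)"
  by (rule sum.mono_neutral_right) (use assms in auto)

lemma grass_tangent_rows_beyond:
  assumes "grass_tangent k r X D" "k \<le> a"
  shows "D a j = 0"
  using assms unfolding grass_tangent_def by auto

lemma grass_tangent_E0_pad:
  assumes "grass_tangent k r (E0 k r) D" "k \<le> l"
  shows "grass_tangent l r (E0 l r) D"
proof -
  have "(\<Sum>a<l. E0 l r a i * D a j) = (\<Sum>a<k. E0 k r a i * D a j)" for i j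
  proof -
    have "(\<Sum>a<l. E0 l r a i * D a j) = (\<Sum>a<k. E0 l r a i * D a j)"
      by (rule sum_lessThan_truncate) (use assms grass_tangent_rows_beyond in auto)
    also have "\<dots> = (\<Sum>a<k. E0 k r a i * D a j)"
      by (rule sum.cong) (use assms in \<open>auto simp: E0_def\<close>)
    finally show ?thesis .
  qed
  then show ?thesis using assms unfolding grass_tangent_def by auto
qed

lemma grass_curve_E0_rows_beyond:
  assumes "r \<le> k" "k \<le> a"
  shows "grass_curve k r (E0 k r) D t a j = 0"
  using assms unfolding grass_curve_def by auto

lemma grass_curve_E0_pad:
  assumes "grass_tangent k r (E0 k r) D" "r \<le> k" "k \<le> l"
  shows "grass_curve k r (E0 k r) D t = grass_curve l r (E0 l r) D t"
proof (intro ext)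
  fix i j
  have zero_rows: "k \<le> a \<Longrightarrow> D a j = 0" for a j
    using grass_tangent_rows_beyond[OF assms(1)] .
  have gram: "(\<Sum>a<l. D a p * D a j) = (\<Sum>a<k. D a p * D a j)" for p j
    by (rule sum_lessThan_truncate) (use assms zero_rows in auto)
  show "grass_curve k r (E0 k r) D t i j = grass_curve l r (E0 l r) D t i j"
  proof (cases "i < k")
    case True
    then show ?thesis using assms unfolding grass_curve_def gram
      by (auto simp: E0_def intro!: sum.cong)
  next
    case False
    then show ?thesis using assms zero_rows[of i] unfolding grass_curve_def
      by (auto simp: E0_def)
  qed
qed

lemma tmult_leading_subtensor:
  assumes "k1 \<le> l" "k2 \<le> m" "k3 \<le> n"
    and X: "\<And>a i. k1 \<le> a \<Longrightarrow> X a i = 0"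
    and Y: "\<And>b j. k2 \<le> b \<Longrightarrow> Y b j = 0"
    and Z: "\<And>c k. k3 \<le> c \<Longrightarrow> Z c k = 0"
  shows "tmult (leading_subtensor B k1 k2 k3) k1 k2 k3 X Y Z = tmult B l m n X Y Z"
proof (intro ext)
  fix i j k
  have "(\<Sum>a<l. \<Sum>b<m. \<Sum>c<n. X a i * Y b j * Z c k * B a b c)
      = (\<Sum>a<k1. \<Sum>b<m. \<Sum>c<n. X a i * Y b j * Z c k * B a b c)"
    by (rule sum_lessThan_truncate) (use assms in auto)
  also have "\<dots> = (\<Sum>a<k1. \<Sum>b<k2. \<Sum>c<n. X a i * Y b j * Z c k * B a b c)"
    by (rule sum.cong[OF refl], rule sum_lessThan_truncate) (use assms in auto)
  also have "\<dots> = (\<Sum>a<k1. \<Sum>b<k2. \<Sum>c<k3. X a i * Y b j * Z c k * B a b c)"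
    by (intro sum.cong[OF refl] sum_lessThan_truncate) (use assms in auto)
  finally show "tmult (leading_subtensor B k1 k2 k3) k1 k2 k3 X Y Z i j k = tmult B l m n X Y Z i j k"
    unfolding tmult_def leading_subtensor_def by simp
qed

lemma grass_hess3_leading_subtensor:
  assumes "r1 \<le> k1" "k1 \<le> l" "r2 \<le> k2" "k2 \<le> m" "r3 \<le> k3" "k3 \<le> n"
    and D1: "grass_tangent k1 r1 (E0 k1 r1) D1"
    and D2: "grass_tangent k2 r2 (E0 k2 r2) D2"
    and D3: "grass_tangent k3 r3 (E0 k3 r3) D3"
  shows "grass_hess3 (objective (leading_subtensor B k1 k2 k3) k1 k2 k3 r1 r2 r3) k1 k2 k3 r1 r2 r3
           (E0 k1 r1, E0 k2 r2, E0 k3 r3) (D1, D2, D3)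
       = grass_hess3 (objective B l m n r1 r2 r3) l m n r1 r2 r3
           (E0 l r1, E0 m r2, E0 n r3) (D1, D2, D3)"
proof -
  let ?\<gamma>1 = "grass_curve k1 r1 (E0 k1 r1) D1"
  let ?\<gamma>2 = "grass_curve k2 r2 (E0 k2 r2) D2"
  let ?\<gamma>3 = "grass_curve k3 r3 (E0 k3 r3) D3"
  have "tmult (leading_subtensor B k1 k2 k3) k1 k2 k3 (?\<gamma>1 t) (?\<gamma>2 t) (?\<gamma>3 t)
      = tmult B l m n (?\<gamma>1 t) (?\<gamma>2 t) (?\<gamma>3 t)" for t
    by (rule tmult_leading_subtensor) (use assms grass_curve_E0_rows_beyond in auto)
  then show ?thesis
    unfolding grass_hess3_def objective_def
    using grass_curve_E0_pad[OF D1] grass_curve_E0_pad[OF D2] grass_curve_E0_pad[OF D3] assms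
    by simp
qed

theorem propositionA1:
  fixes B :: tensor3 and l m n k1 k2 k3 r1 r2 r3 :: nat
  assumes "r1 < k1" "k1 < l" "r2 < k2" "k2 < m" "r3 < k3" "k3 < n"
    and "C = (\<lambda>a b c. if a < k1 \<and> b < k2 \<and> c < k3 then B a b c else 0)"
    and "grass_hess3_posdef (objective B l m n r1 r2 r3) l m n r1 r2 r3 (E0 l r1, E0 m r2, E0 n r3)"
  shows "grass_hess3_posdef (objective C k1 k2 k3 r1 r2 r3) k1 k2 k3 r1 r2 r3
           (E0 k1 r1, E0 k2 r2, E0 k3 r3)"
  unfolding grass_hess3_posdef_def fst_conv snd_conv
proof (intro allI impI, elim conjE)
  fix D1 D2 D3
  assume D1: "grass_tangent k1 r1 (E0 k1 r1) D1" and D2: "grass_tangent k2 r2 (E0 k2 r2) D2"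
    and D3: "grass_tangent k3 r3 (E0 k3 r3) D3"
    and nonzero: "\<not> (D1 = (\<lambda>_ _. 0) \<and> D2 = (\<lambda>_ _. 0) \<and> D3 = (\<lambda>_ _. 0))"
  have "grass_tangent l r1 (E0 l r1) D1" "grass_tangent m r2 (E0 m r2) D2"
    "grass_tangent n r3 (E0 n r3) D3"
    using grass_tangent_E0_pad D1 D2 D3 assms(2,4,6) by auto
  then have "grass_hess3 (objective B l m n r1 r2 r3) l m n r1 r2 r3
               (E0 l r1, E0 m r2, E0 n r3) (D1, D2, D3) > 0"
    using assms(8) nonzero unfolding grass_hess3_posdef_def by auto
  then show "grass_hess3 (objective C k1 k2 k3 r1 r2 r3) k1 k2 k3 r1 r2 r3
               (E0 k1 r1, E0 k2 r2, E0 k3 r3) (D1, D2, D3) > 0"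
    using grass_hess3_leading_subtensor[OF _ _ _ _ _ _ D1 D2 D3, of l m n B] assms(1-7)
    unfolding leading_subtensor_def by simp
qed

end
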